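(* Let $D$ be a strongly oriented graph, with $n(D)$ vertices and $m(D)$ arcs. Then $\overrightarrow{hn}_{g}(D)\leq m(D)-n(D)+2$.
   Context: An oriented graph is a digraph obtained from a finite simple graph by orienting each edge in exactly one direction (so there are no loops and never both arcs $(u,v)$ and $(v,u)$). It is strongly oriented if for every ordered pair $u,v$ of distinct vertices there is a directed path from $u$ to $v$. The geodetic interval function $I_g$ on an oriented graph $D$ assigns to a pair $(u,v)$ the set of vertices lying on some shortest directed $(u,v)$-path or on some shortest directed $(v,u)$-path (this set contains $u$ and $v$). For $S\subseteq V(D)$, $I_g(S)=\bigcup_{u,v\in S}I_g(u,v)$; a set $C$ is convex if $I_g(C)=C$; the convex hull of $S$ is the smallest convex set containing $S$ (equivalently, the union of the iterates $I_g^k(S)$). A hull set is a set whose convex hull is $V(D)$, and $\overrightarrow{hn}_{g}(D)$ (the geodetic hull number) is the minimum size of a hull set of $D$. *)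

theory Defs
  imports Main
begin

definition oriented_graph :: "'a set \<Rightarrow> ('a \<times> 'a) set \<Rightarrow> bool" where
  "oriented_graph V A \<longleftrightarrow> finite V \<and> A \<subseteq> V \<times> V
     \<and> (\<forall>u. (u, u) \<notin> A) \<and> (\<forall>u v. (u, v) \<in> A \<longrightarrow> (v, u) \<notin> A)"

definition dpath :: "('a \<times> 'a) set \<Rightarrow> 'a list \<Rightarrow> bool" where
  "dpath A p \<longleftrightarrow> p \<noteq> [] \<and> distinct p \<and> (\<forall>i. Suc i < length p \<longrightarrow> (p ! i, p ! Suc i) \<in> A)"

definition dpath_from_to :: "('a \<times> 'a) set \<Rightarrow> 'a \<Rightarrow> 'a \<Rightarrow> 'a list \<Rightarrow> bool" where
  "dpath_from_to A u v p \<longleftrightarrow> dpath A p \<and> hd p = u \<and> last p = v"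

definition strongly_oriented :: "'a set \<Rightarrow> ('a \<times> 'a) set \<Rightarrow> bool" where
  "strongly_oriented V A \<longleftrightarrow> oriented_graph V A
     \<and> (\<forall>u\<in>V. \<forall>v\<in>V. u \<noteq> v \<longrightarrow> (\<exists>p. dpath_from_to A u v p))"

definition shortest_dpath :: "('a \<times> 'a) set \<Rightarrow> 'a \<Rightarrow> 'a \<Rightarrow> 'a list \<Rightarrow> bool" where
  "shortest_dpath A u v p \<longleftrightarrow> dpath_from_to A u v p
     \<and> (\<forall>q. dpath_from_to A u v q \<longrightarrow> length p \<le> length q)"

definition geo_interval :: "('a \<times> 'a) set \<Rightarrow> 'a \<Rightarrow> 'a \<Rightarrow> 'a set" where
  "geo_interval A u v = {w. \<exists>p. (shortest_dpath A u v p \<or> shortest_dpath A v u p) \<and> w \<in> set p}"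

definition geo_interval_set :: "('a \<times> 'a) set \<Rightarrow> 'a set \<Rightarrow> 'a set" where
  "geo_interval_set A S = (\<Union>u\<in>S. \<Union>v\<in>S. geo_interval A u v)"

definition geo_convex :: "('a \<times> 'a) set \<Rightarrow> 'a set \<Rightarrow> bool" where
  "geo_convex A C \<longleftrightarrow> geo_interval_set A C = C"

definition geo_hull :: "'a set \<Rightarrow> ('a \<times> 'a) set \<Rightarrow> 'a set \<Rightarrow> 'a set" where
  "geo_hull V A S = \<Inter>{C. S \<subseteq> C \<and> C \<subseteq> V \<and> geo_convex A C}"

definition geo_hull_set :: "'a set \<Rightarrow> ('a \<times> 'a) set \<Rightarrow> 'a set \<Rightarrow> bool" where
  "geo_hull_set V A S \<longleftrightarrow> S \<subseteq> V \<and> geo_hull V A S = V"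

definition geo_hull_number :: "'a set \<Rightarrow> ('a \<times> 'a) set \<Rightarrow> nat" where
  "geo_hull_number V A = (LEAST k. \<exists>S. geo_hull_set V A S \<and> card S = k)"

end

theory Submission
  imports Defs
begin

text \<open>Grow a hull set one vertex at a time, starting from a single vertex, while maintaining
  the invariant |S| + |H| \<le> m(H) + 2 for the hull H of S, where m(H) counts the arcs inside H.
  If H \<noteq> V, strong connectivity yields an arc (h, w) leaving H; put w into S. In the new
  hull H', convexity keeps the first arc of a shortest (x, h)-path inside H' for every
  x \<in> H' - H. These arcs have pairwise different tails outside H, so together with (h, w) they
  add at least 1 + |H' - H| arcs, which pays for the new vertex of S and the new vertices
  of the hull.\<close>

lemma dpath_set_subset:
  assumes "A \<subseteq> V \<times> V" "dpath A p" "hd p \<in> V"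
  shows "set p \<subseteq> V"
proof
  fix w assume "w \<in> set p"
  then obtain i where i: "i < length p" "w = p ! i" by (metis in_set_conv_nth)
  show "w \<in> V"
  proof (cases i)
    case 0
    then show ?thesis using i assms(2,3) by (simp add: dpath_def hd_conv_nth)
  next
    case (Suc j)
    then have "(p ! j, p ! i) \<in> A" using assms(2) i unfolding dpath_def by auto
    then show ?thesis using assms(1) i by auto
  qed
qed

lemma shortest_dpath_self_iff: "shortest_dpath A u u p \<longleftrightarrow> p = [u]"
proof -
  have single: "dpath_from_to A u u [u]"
    by (simp add: dpath_from_to_def dpath_def)
  have "p = [u]" if "shortest_dpath A u u p"
  proof -
    have "length p \<le> 1" using that single unfolding shortest_dpath_def by force
    moreover have "p \<noteq> []" "hd p = u"
      using that by (auto simp: shortest_dpath_def dpath_from_to_def dpath_def)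
    ultimately show ?thesis by (cases p) auto
  qed
  moreover have "shortest_dpath A u u [u]"
    using single by (auto simp: shortest_dpath_def dpath_from_to_def dpath_def Suc_le_eq)
  ultimately show ?thesis by blast
qed

lemma geo_interval_self: "geo_interval A u u = {u}"
  by (auto simp: geo_interval_def shortest_dpath_self_iff)

lemma geo_interval_subset:
  assumes "A \<subseteq> V \<times> V" "u \<in> V" "v \<in> V"
  shows "geo_interval A u v \<subseteq> V"
  using assms dpath_set_subset[OF assms(1)]
  unfolding geo_interval_def shortest_dpath_def dpath_from_to_def by blast

lemma subset_geo_interval_set: "S \<subseteq> geo_interval_set A S"
proof
  fix x assume "x \<in> S"
  moreover have "x \<in> geo_interval A x x" by (simp add: geo_interval_self)
  ultimately show "x \<in> geo_interval_set A S" unfolding geo_interval_set_def by blast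
qed

lemma geo_convex_iff_subset: "geo_convex A C \<longleftrightarrow> geo_interval_set A C \<subseteq> C"
  using subset_geo_interval_set[of C A] by (auto simp: geo_convex_def)

lemma geo_convex_vertices:
  assumes "A \<subseteq> V \<times> V"
  shows "geo_convex A V"
  unfolding geo_convex_iff_subset geo_interval_set_def
  by (intro UN_least geo_interval_subset[OF assms])

lemma geo_convex_singleton: "geo_convex A {u}"
  by (simp add: geo_convex_def geo_interval_set_def geo_interval_self)

lemma geo_convex_Inter:
  assumes "\<And>C. C \<in> F \<Longrightarrow> geo_convex A C"
  shows "geo_convex A (\<Inter>F)"
  unfolding geo_convex_iff_subset geo_interval_set_def
proof (intro UN_least Inter_greatest)
  fix u v C assume "u \<in> \<Inter>F" "v \<in> \<Inter>F" "C \<in> F"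
  then have "geo_interval A u v \<subseteq> geo_interval_set A C" unfolding geo_interval_set_def by blast
  also have "\<dots> \<subseteq> C" using assms[OF \<open>C \<in> F\<close>] by (simp add: geo_convex_def)
  finally show "geo_interval A u v \<subseteq> C" .
qed

lemma geo_convex_geo_hull: "geo_convex A (geo_hull V A S)"
  unfolding geo_hull_def by (rule geo_convex_Inter) auto

lemma subset_geo_hull: "S \<subseteq> geo_hull V A S"
  unfolding geo_hull_def by auto

lemma geo_hull_least: "S \<subseteq> C \<Longrightarrow> C \<subseteq> V \<Longrightarrow> geo_convex A C \<Longrightarrow> geo_hull V A S \<subseteq> C"
  unfolding geo_hull_def by blast

lemma geo_hull_subset: "A \<subseteq> V \<times> V \<Longrightarrow> S \<subseteq> V \<Longrightarrow> geo_hull V A S \<subseteq> V"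
  by (rule geo_hull_least[OF _ order_refl geo_convex_vertices])

lemma geo_hull_mono: "S \<subseteq> T \<Longrightarrow> geo_hull V A S \<subseteq> geo_hull V A T"
  unfolding geo_hull_def by blast

lemma geo_hull_singleton: "u \<in> V \<Longrightarrow> geo_hull V A {u} = {u}"
  by (intro subset_antisym geo_hull_least subset_geo_hull geo_convex_singleton) auto

lemma shortest_dpath_exists:
  assumes "dpath_from_to A u v q"
  shows "\<exists>p. shortest_dpath A u v p"
  using ex_has_least_nat[of "dpath_from_to A u v" q length] assms
  unfolding shortest_dpath_def by blast

lemma geo_convex_shortest_dpath_subset:
  assumes "geo_convex A C" "u \<in> C" "v \<in> C" "shortest_dpath A u v p"
  shows "set p \<subseteq> C"
proof -
  have "set p \<subseteq> geo_interval A u v" using assms(4) unfolding geo_interval_def by blast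
  also have "\<dots> \<subseteq> geo_interval_set A C" using assms(2,3) unfolding geo_interval_set_def by blast
  finally show ?thesis using assms(1) unfolding geo_convex_def by simp
qed

lemma nth_exit_index:
  assumes "p \<noteq> []" "P (hd p)" "\<not> P (last p)"
  shows "\<exists>i. Suc i < length p \<and> P (p ! i) \<and> \<not> P (p ! Suc i)"
  using assms
proof (induction p)
  case Nil
  then show ?case by simp
next
  case (Cons a p)
  have "p \<noteq> []" using Cons.prems by auto
  show ?case
  proof (cases "P (hd p)")
    case True
    have "\<not> P (last p)" using Cons.prems(3) \<open>p \<noteq> []\<close> by simp
    then obtain i where "Suc i < length p" "P (p ! i)" "\<not> P (p ! Suc i)"
      using Cons.IH[OF \<open>p \<noteq> []\<close> True] by blast
    then show ?thesis by (intro exI[of _ "Suc i"]) simp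
  next
    case False
    have "P a" using Cons.prems(2) by simp
    then show ?thesis using False \<open>p \<noteq> []\<close> by (intro exI[of _ 0]) (simp add: hd_conv_nth)
  qed
qed

lemma strongly_oriented_arc_leaving:
  assumes so: "strongly_oriented V A" and "H \<subseteq> V" "u \<in> H" "v \<in> V - H"
  shows "\<exists>h\<in>H. \<exists>w\<in>V - H. (h, w) \<in> A"
proof -
  have arcs: "A \<subseteq> V \<times> V" using so by (simp add: strongly_oriented_def oriented_graph_def)
  have "u \<in> V" "u \<noteq> v" using assms(2-4) by auto
  then obtain p where p: "dpath_from_to A u v p"
    using so \<open>v \<in> V - H\<close> unfolding strongly_oriented_def by blast
  then obtain i where i: "Suc i < length p" "p ! i \<in> H" "p ! Suc i \<notin> H"
    using nth_exit_index[of p "\<lambda>x. x \<in> H"] assms(3,4) unfolding dpath_from_to_def dpath_def by auto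
  moreover have "(p ! i, p ! Suc i) \<in> A" using i p unfolding dpath_from_to_def dpath_def by auto
  ultimately show ?thesis using arcs by blast
qed

lemma geo_convex_out_arc:
  assumes so: "strongly_oriented V A" and "geo_convex A C" "C \<subseteq> V" "x \<in> C" "y \<in> C" "x \<noteq> y"
  shows "\<exists>z\<in>C. (x, z) \<in> A"
proof -
  have "x \<in> V" "y \<in> V" using assms(3-5) by auto
  then obtain q where "dpath_from_to A x y q"
    using so \<open>x \<noteq> y\<close> unfolding strongly_oriented_def by blast
  then obtain p where p: "shortest_dpath A x y p" by (metis shortest_dpath_exists)
  have "set p \<subseteq> C" using geo_convex_shortest_dpath_subset[OF assms(2,4,5) p] .
  moreover have "dpath A p" "hd p = x" "last p = y"
    using p unfolding shortest_dpath_def dpath_from_to_def by auto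
  moreover from this have "Suc 0 < length p"
    using \<open>x \<noteq> y\<close> by (cases p) (auto simp: dpath_def)
  ultimately show ?thesis unfolding dpath_def by (metis hd_conv_nth nth_mem subsetD)
qed

lemma card_arcs_convex_extension:
  assumes so: "strongly_oriented V A" and "geo_convex A C" "C \<subseteq> V" "H \<subseteq> C"
    and "(h, w) \<in> A" "h \<in> H" "w \<in> C - H"
  shows "card (A \<inter> H \<times> H) + 1 + card (C - H) \<le> card (A \<inter> C \<times> C)"
proof -
  have "\<forall>x\<in>C - H. \<exists>z\<in>C. (x, z) \<in> A"
    using geo_convex_out_arc[OF so assms(2,3), of _ h] assms(4,6) by blast
  then obtain s where s: "\<And>x. x \<in> C - H \<Longrightarrow> s x \<in> C \<and> (x, s x) \<in> A" by metis
  have "finite C"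
    using so assms(3) finite_subset unfolding strongly_oriented_def oriented_graph_def by blast
  then have fin: "finite H" using assms(4) finite_subset by blast
  let ?inner = "A \<inter> H \<times> H \<union> {(h, w)}" and ?new = "(\<lambda>x. (x, s x)) ` (C - H)"
  have "card (?inner \<union> ?new) = card ?inner + card ?new"
    using fin \<open>finite C\<close> assms(6) by (intro card_Un_disjoint) auto
  moreover have "card ?inner = card (A \<inter> H \<times> H) + 1" using fin assms(7) by simp
  moreover have "card ?new = card (C - H)" by (simp add: card_image inj_on_def)
  ultimately have "card (A \<inter> H \<times> H) + 1 + card (C - H) = card (?inner \<union> ?new)" by linarith
  also have "\<dots> \<le> card (A \<inter> C \<times> C)"
    using \<open>finite C\<close> s assms(4,5,6,7) by (intro card_mono) auto
  finally show ?thesis .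
qed

lemma geo_hull_set_extend:
  assumes so: "strongly_oriented V A" and "S \<subseteq> V" "S \<noteq> {}"
    and "card S + card (geo_hull V A S) \<le> card (A \<inter> geo_hull V A S \<times> geo_hull V A S) + 2"
  shows "\<exists>T. geo_hull_set V A T \<and> card T + card V \<le> card A + 2"
  using assms(2-)
proof (induction "card (V - geo_hull V A S)" arbitrary: S rule: less_induct)
  case less
  let ?H = "geo_hull V A S"
  have fin: "finite V" and arcs: "A \<subseteq> V \<times> V"
    using so unfolding strongly_oriented_def oriented_graph_def by auto
  have HV: "?H \<subseteq> V" using geo_hull_subset[OF arcs less.prems(1)] .
  show ?case
  proof (cases "?H = V")
    case True
    then have "A \<inter> ?H \<times> ?H = A" using arcs by blast
    then show ?thesis using True less.prems unfolding geo_hull_set_def by auto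
  next
    case False
    obtain h w where hw: "h \<in> ?H" "w \<in> V - ?H" "(h, w) \<in> A"
      using strongly_oriented_arc_leaving[OF so HV] less.prems(2) subset_geo_hull[of S V A] False HV
      by blast
    let ?S' = "insert w S" and ?H' = "geo_hull V A (insert w S)"
    have HH': "?H \<subseteq> ?H'" by (rule geo_hull_mono) auto
    have wH': "w \<in> ?H'" using subset_geo_hull[of ?S'] by blast
    have S'V: "?S' \<subseteq> V" using hw less.prems(1) by blast
    have H'V: "?H' \<subseteq> V" using geo_hull_subset[OF arcs S'V] .
    have "card (A \<inter> ?H \<times> ?H) + 1 + card (?H' - ?H) \<le> card (A \<inter> ?H' \<times> ?H')"
      using card_arcs_convex_extension[OF so geo_convex_geo_hull H'V HH' hw(3)] hw wH' by blast
    moreover have "card ?H' = card ?H + card (?H' - ?H)"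
      using HH' finite_subset[OF H'V fin] by (metis card_Diff_subset card_mono finite_subset le_add_diff_inverse)
    moreover have "card ?S' = card S + 1"
    proof -
      have "w \<notin> S" using hw(2) subset_geo_hull[of S V A] by blast
      then show ?thesis using finite_subset[OF less.prems(1) fin] by simp
    qed
    ultimately have "card ?S' + card ?H' \<le> card (A \<inter> ?H' \<times> ?H') + 2"
      using less.prems(3) by linarith
    moreover have "card (V - ?H') < card (V - ?H)"
      using HH' wH' hw fin by (intro psubset_card_mono) auto
    ultimately show ?thesis using less.hyps S'V by blast
  qed
qed

lemma strongly_oriented_geo_hull_set_bound:
  assumes so: "strongly_oriented V A"
  shows "\<exists>T. geo_hull_set V A T \<and> card T + card V \<le> card A + 2"
proof (cases "V = {}")
  case True
  moreover have arcs: "A \<subseteq> V \<times> V" using so by (simp add: strongly_oriented_def oriented_graph_def)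
  ultimately have "geo_hull_set V A {}" "A = {}"
    using geo_hull_subset[OF arcs, of "{}"] by (auto simp: geo_hull_set_def)
  then show ?thesis using True by (intro exI[of _ "{}"]) simp
next
  case False
  then obtain u where u: "u \<in> V" by blast
  have "A \<inter> {u} \<times> {u} = {}" using so by (auto simp: strongly_oriented_def oriented_graph_def)
  then have "card {u} + card (geo_hull V A {u}) \<le> card (A \<inter> geo_hull V A {u} \<times> geo_hull V A {u}) + 2"
    using geo_hull_singleton[OF u] by simp
  then show ?thesis using geo_hull_set_extend[OF so, of "{u}"] u by simp
qed

lemma geo_hull_number_le: "geo_hull_set V A T \<Longrightarrow> geo_hull_number V A \<le> card T"
  unfolding geo_hull_number_def by (intro Least_le) blast

theorem proposition3:
  fixes V :: "'a set" and A :: "('a \<times> 'a) set"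
  assumes "strongly_oriented V A"
  shows "int (geo_hull_number V A) \<le> int (card A) - int (card V) + 2"
proof -
  obtain T where "geo_hull_set V A T" "card T + card V \<le> card A + 2"
    using strongly_oriented_geo_hull_set_bound[OF assms] by blast
  then show ?thesis using geo_hull_number_le[of V A T] by linarith
qed

end
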